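(* Let $\mu$ be a Borel probability measure on $\mathbb{R}^n$ and $\Lambda\subset\mathbb{R}^n$. The following are equivalent: (i) $\{e_\lambda\}_{\lambda\in\Lambda}$ is orthogonal in $L^2(\mu)$; (ii) with $\mathcal{H}(\Lambda)$ the closed linear span of $\{e_\lambda\}_{\lambda\in\Lambda}$ in $L^2(\mu)$, there is a linear isometry $W_\Lambda:\mathcal{H}(\Lambda)\to L^2(G,\mu_{Bohr})$ with $W_\Lambda e_\lambda=\tilde e_\lambda$ for all $\lambda\in\Lambda$; (iii) the function $h_\Lambda(t):=\sum_{\lambda\in\Lambda}|\hat\mu(t-\lambda)|^2$ satisfies $h_\Lambda(t)\le 1$ for all $t\in\mathbb{R}^n$.
   Context: $e_\lambda(x)=e^{2\pi i\lambda\cdot x}$; $\hat\mu(t)=\int e^{2\pi it\cdot x}\,d\mu(x)$. The Bohr compactification $G$ is the set of all group homomorphisms $\chi:\mathbb{R}^n\to\mathbb{T}$ with pointwise multiplication and the topology of pointwise convergence (a compact abelian group, the dual of $\mathbb{R}^n$ with discrete topology); $\mu_{Bohr}$ is its normalized Haar measure, and $\tilde e_\lambda(\chi)=\chi(\lambda)$ for $\chi\in G$. *)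

theory Defs
  imports "HOL-Probability.Probability"
begin

definition expo :: "real^'n \<Rightarrow> real^'n \<Rightarrow> complex" where
  "expo l x = cis (2 * pi * (l \<bullet> x))"

definition fourier_meas :: "(real^'n) measure \<Rightarrow> real^'n \<Rightarrow> complex" where
  "fourier_meas mu t = (LINT x|mu. cis (2 * pi * (t \<bullet> x)))"

definition sq_integrable :: "'a measure \<Rightarrow> ('a \<Rightarrow> complex) \<Rightarrow> bool" where
  "sq_integrable M f \<longleftrightarrow> f \<in> borel_measurable M \<and> integrable M (\<lambda>x. (cmod (f x))^2)"

definition L2_norm :: "'a measure \<Rightarrow> ('a \<Rightarrow> complex) \<Rightarrow> real" where
  "L2_norm M f = sqrt (LINT x|M. (cmod (f x))^2)"

definition trig_polys :: "(real^'n) set \<Rightarrow> (real^'n \<Rightarrow> complex) set" where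
  "trig_polys Lam = {(\<lambda>x. \<Sum>l\<in>F. c l * expo l x) | F c. finite F \<and> F \<subseteq> Lam}"

definition closed_span :: "(real^'n) measure \<Rightarrow> (real^'n) set \<Rightarrow> (real^'n \<Rightarrow> complex) set" where
  "closed_span mu Lam = {f. sq_integrable mu f \<and>
      (\<forall>e>0. \<exists>p\<in>trig_polys Lam. L2_norm mu (\<lambda>x. f x - p x) < e)}"

text \<open>The Bohr compactification of R^n: all group homomorphisms R^n -> T (T = unit circle in C).\<close>
definition bohr_group :: "(real^'n \<Rightarrow> complex) set" where
  "bohr_group = {chi. (\<forall>x. cmod (chi x) = 1) \<and> (\<forall>x y. chi (x + y) = chi x * chi y)}"

text \<open>Measurable space on G: trace of the product sigma-algebra (generated by the evaluation
  maps chi -> chi(lambda)); this is the Baire sigma-algebra of the compact group G.\<close>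
definition bohr_space :: "(real^'n \<Rightarrow> complex) measure" where
  "bohr_space = restrict_space (Pi\<^sub>M UNIV (\<lambda>_. borel)) bohr_group"

definition bohr_haar :: "(real^'n \<Rightarrow> complex) measure \<Rightarrow> bool" where
  "bohr_haar M \<longleftrightarrow> prob_space M \<and> sets M = sets bohr_space \<and> space M = bohr_group \<and>
     (\<forall>psi\<in>bohr_group. distr M M (\<lambda>chi x. psi x * chi x) = M)"

end

theory Submission
  imports Defs
begin

text \<open>
  Each of (i)--(iii) says that the exponentials \<open>e\<^sub>\<lambda>\<close> form an orthonormal system in
  \<open>L\<^sup>2(\<mu>)\<close>; they have norm one because \<open>\<mu>\<close> is a probability measure.
  The characters \<open>\<chi> \<mapsto> \<chi>(\<lambda>)\<close> are orthonormal in \<open>L\<^sup>2\<close> of the Haar measure: translating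
  by a character \<open>\<psi>\<close> with \<open>\<psi>(\<lambda> - \<lambda>') = -1\<close> shows that \<open>\<chi>(\<lambda> - \<lambda>')\<close> has integral zero.
  So under (i), sending \<open>f\<close> in the closed span to the Riesz--Fischer sum of its Fourier
  coefficients \<open>\<langle>f, e\<^sub>\<lambda>\<rangle>\<close> taken against the characters is an isometry by Parseval's
  identity on both sides; it is linear and maps \<open>e\<^sub>\<lambda>\<close> to \<open>\<chi>(\<lambda>)\<close> because an element of a
  closed span is determined almost everywhere by its coefficients. Conversely, for
  \<open>z = \<langle>e\<^sub>\<lambda>, e\<^bsub>\<lambda>'\<^esub>\<rangle>\<close> the isometry forces \<open>\<parallel>e\<^sub>\<lambda> + z e\<^bsub>\<lambda>'\<^esub>\<parallel>\<^sup>2\<close>, which is \<open>1 + 3|z|\<^sup>2\<close>, to equal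
  the norm \<open>1 + |z|\<^sup>2\<close> of its image. Finally \<open>\<langle>e\<^sub>t, e\<^sub>\<lambda>\<rangle>\<close> is the Fourier transform of \<open>\<mu>\<close>
  at \<open>t - \<lambda>\<close>, so (i) gives (iii) by Bessel's inequality for \<open>e\<^sub>t\<close>, and (iii) at \<open>t = \<lambda>\<close>
  bounds \<open>1 + |\<langle>e\<^sub>\<lambda>, e\<^bsub>\<lambda>'\<^esub>\<rangle>|\<^sup>2\<close> by \<open>1\<close>.
\<close>

section \<open>Square-integrable functions\<close>

lemma borel_measurable_cnj [measurable]:
  "f \<in> borel_measurable M \<Longrightarrow> (\<lambda>x. cnj (f x)) \<in> borel_measurable M"
  by (rule borel_measurable_continuous_on[OF continuous_on_cnj[OF continuous_on_id]])

definition L2_inner :: "'a measure \<Rightarrow> ('a \<Rightarrow> complex) \<Rightarrow> ('a \<Rightarrow> complex) \<Rightarrow> complex" where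
  "L2_inner M f g = (LINT x|M. f x * cnj (g x))"

definition L2_sqnorm :: "'a measure \<Rightarrow> ('a \<Rightarrow> complex) \<Rightarrow> real" where
  "L2_sqnorm M f = (LINT x|M. (cmod (f x))^2)"

lemma L2_norm_eq_sqrt: "L2_norm M f = sqrt (L2_sqnorm M f)"
  by (simp add: L2_norm_def L2_sqnorm_def)

lemma L2_sqnorm_nonneg: "L2_sqnorm M f \<ge> 0"
  unfolding L2_sqnorm_def by simp

lemma sq_integrable_measurable: "sq_integrable M f \<Longrightarrow> f \<in> borel_measurable M"
  by (simp add: sq_integrable_def)

lemma integrable_mult_cnj:
  assumes "sq_integrable M f" "sq_integrable M g"
  shows "integrable M (\<lambda>x. f x * cnj (g x))"
proof (rule Bochner_Integration.integrable_bound)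
  show "integrable M (\<lambda>x. (cmod (f x))^2 + (cmod (g x))^2)"
    using assms by (auto simp: sq_integrable_def)
  have [measurable]: "f \<in> borel_measurable M" "g \<in> borel_measurable M"
    using assms by (auto simp: sq_integrable_def)
  show "(\<lambda>x. f x * cnj (g x)) \<in> borel_measurable M" by measurable
  have "cmod (f x) * cmod (g x) \<le> (cmod (f x))^2 + (cmod (g x))^2" for x
    using sum_squares_bound[of "cmod (f x)" "cmod (g x)"]
      mult_nonneg_nonneg[OF norm_ge_zero norm_ge_zero, of "f x" "g x"] by linarith
  then show "AE x in M. norm (f x * cnj (g x)) \<le> norm ((cmod (f x))^2 + (cmod (g x))^2)"
    by (simp add: norm_mult)
qed

lemma sq_integrable_scale:
  "sq_integrable M f \<Longrightarrow> sq_integrable M (\<lambda>x. a * f x)"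
  by (auto simp: sq_integrable_def norm_mult power_mult_distrib)

lemma cmod_add_sq_le: "(cmod (a + b))^2 \<le> 2 * (cmod a)^2 + 2 * (cmod b)^2"
proof -
  have "(cmod (a + b))^2 \<le> (cmod a + cmod b)^2"
    by (rule power_mono[OF norm_triangle_ineq norm_ge_zero])
  then show ?thesis
    unfolding power2_sum using sum_squares_bound[of "cmod a" "cmod b"] by linarith
qed

lemma sq_integrable_add:
  assumes "sq_integrable M f" "sq_integrable M g"
  shows "sq_integrable M (\<lambda>x. f x + g x)"
proof -
  have meas: "(\<lambda>x. f x + g x) \<in> borel_measurable M"
    using assms by (auto simp: sq_integrable_def)
  have "integrable M (\<lambda>x. (cmod (f x + g x))^2)"
  proof (rule Bochner_Integration.integrable_bound)
    show "integrable M (\<lambda>x. 2 * (cmod (f x))^2 + 2 * (cmod (g x))^2)"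
      using assms by (auto simp: sq_integrable_def)
    show "(\<lambda>x. (cmod (f x + g x))^2) \<in> borel_measurable M"
      using meas by measurable
    have "(cmod (f x + g x))^2 \<le> 2 * (cmod (f x))^2 + 2 * (cmod (g x))^2" for x
      by (rule cmod_add_sq_le)
    then show "AE x in M. norm ((cmod (f x + g x))^2) \<le> norm (2 * (cmod (f x))^2 + 2 * (cmod (g x))^2)"
      by simp
  qed
  with meas show ?thesis unfolding sq_integrable_def by blast
qed

lemma sq_integrable_diff:
  assumes "sq_integrable M f" "sq_integrable M g"
  shows "sq_integrable M (\<lambda>x. f x - g x)"
  using sq_integrable_add[OF assms(1) sq_integrable_scale[OF assms(2), of "-1"]] by simp

lemma sq_integrable_sum:
  "(\<And>i. i \<in> F \<Longrightarrow> sq_integrable M (f i)) \<Longrightarrow> sq_integrable M (\<lambda>x. \<Sum>i\<in>F. f i x)"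
proof (induction F rule: infinite_finite_induct)
  case (insert i F)
  then show ?case by (simp add: sq_integrable_add)
qed (simp_all add: sq_integrable_def)

lemma L2_inner_cnj: "L2_inner M g f = cnj (L2_inner M f g)"
  unfolding L2_inner_def Bochner_Integration.integral_cnj[symmetric] by (simp add: mult.commute)

lemma L2_inner_scale_left: "L2_inner M (\<lambda>x. a * f x) g = a * L2_inner M f g"
  unfolding L2_inner_def by (simp add: mult.assoc)

lemma L2_inner_scale_right: "L2_inner M f (\<lambda>x. a * g x) = cnj a * L2_inner M f g"
  by (simp add: L2_inner_cnj[of M f] L2_inner_scale_left)

lemma L2_inner_add_left:
  assumes "sq_integrable M f" "sq_integrable M g" "sq_integrable M h"
  shows "L2_inner M (\<lambda>x. f x + g x) h = L2_inner M f h + L2_inner M g h"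
  unfolding L2_inner_def using integrable_mult_cnj[OF assms(1,3)] integrable_mult_cnj[OF assms(2,3)]
  by (simp add: distrib_right)

lemma L2_inner_add_right:
  assumes "sq_integrable M f" "sq_integrable M g" "sq_integrable M h"
  shows "L2_inner M h (\<lambda>x. f x + g x) = L2_inner M h f + L2_inner M h g"
  by (simp add: L2_inner_cnj[of M h] L2_inner_add_left[OF assms])

lemma L2_inner_diff_left:
  assumes "sq_integrable M f" "sq_integrable M g" "sq_integrable M h"
  shows "L2_inner M (\<lambda>x. f x - g x) h = L2_inner M f h - L2_inner M g h"
  unfolding L2_inner_def using integrable_mult_cnj[OF assms(1,3)] integrable_mult_cnj[OF assms(2,3)]
  by (simp add: left_diff_distrib)

lemma L2_inner_diff_right:
  assumes "sq_integrable M f" "sq_integrable M g" "sq_integrable M h"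
  shows "L2_inner M h (\<lambda>x. f x - g x) = L2_inner M h f - L2_inner M h g"
  by (simp add: L2_inner_cnj[of M h] L2_inner_diff_left[OF assms])

lemma L2_inner_sum_left:
  assumes "\<And>i. i \<in> F \<Longrightarrow> sq_integrable M (f i)" "sq_integrable M h"
  shows "L2_inner M (\<lambda>x. \<Sum>i\<in>F. f i x) h = (\<Sum>i\<in>F. L2_inner M (f i) h)"
  using assms
proof (induction F rule: infinite_finite_induct)
  case (insert i F)
  then show ?case by (simp add: L2_inner_add_left sq_integrable_sum)
qed (simp_all add: L2_inner_def)

lemma L2_inner_sum_right:
  assumes "\<And>i. i \<in> F \<Longrightarrow> sq_integrable M (f i)" "sq_integrable M h"
  shows "L2_inner M h (\<lambda>x. \<Sum>i\<in>F. f i x) = (\<Sum>i\<in>F. L2_inner M h (f i))"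
proof -
  have "L2_inner M h (\<lambda>x. \<Sum>i\<in>F. f i x) = cnj (L2_inner M (\<lambda>x. \<Sum>i\<in>F. f i x) h)"
    by (rule L2_inner_cnj)
  also have "\<dots> = cnj (\<Sum>i\<in>F. L2_inner M (f i) h)"
    using L2_inner_sum_left[of F M f h] assms by simp
  also have "\<dots> = (\<Sum>i\<in>F. cnj (L2_inner M (f i) h))" by (rule cnj_sum)
  also have "\<dots> = (\<Sum>i\<in>F. L2_inner M h (f i))" by (simp add: L2_inner_cnj[of M h])
  finally show ?thesis .
qed

lemma complex_of_real_cmod_sq: "complex_of_real ((cmod z)^2) = z * cnj z"
  by (metis complex_norm_square of_real_power)

lemma L2_inner_self: "L2_inner M f f = complex_of_real (L2_sqnorm M f)"
proof -
  have "\<And>x. f x * cnj (f x) = complex_of_real ((cmod (f x))^2)"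
    by (rule complex_of_real_cmod_sq[symmetric])
  then show ?thesis unfolding L2_inner_def L2_sqnorm_def by (simp del: of_real_power)
qed

lemma L2_sqnorm_scale: "L2_sqnorm M (\<lambda>x. a * f x) = (cmod a)^2 * L2_sqnorm M f"
  unfolding L2_sqnorm_def by (simp add: norm_mult power_mult_distrib)

lemma L2_sqnorm_eq_0_AE:
  assumes "sq_integrable M f" "L2_sqnorm M f = 0"
  shows "AE x in M. f x = 0"
proof -
  have int: "integrable M (\<lambda>x. (cmod (f x))^2)" using assms by (simp add: sq_integrable_def)
  have "AE x in M. (cmod (f x))^2 = 0"
    using integral_nonneg_eq_0_iff_AE[OF int] assms(2) unfolding L2_sqnorm_def by simp
  then show ?thesis by simp
qed

lemma L2_sqnorm_cong_AE:
  assumes "sq_integrable M f" "sq_integrable M g" "AE x in M. f x = g x"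
  shows "L2_sqnorm M f = L2_sqnorm M g"
  unfolding L2_sqnorm_def
  by (rule integral_cong_AE) (use assms in \<open>auto simp: sq_integrable_def\<close>)

lemma L2_sqnorm_add_le:
  assumes "sq_integrable M f" "sq_integrable M g"
  shows "L2_sqnorm M (\<lambda>x. f x + g x) \<le> 2 * L2_sqnorm M f + 2 * L2_sqnorm M g"
proof -
  have "L2_sqnorm M (\<lambda>x. f x + g x) \<le> (LINT x|M. 2 * (cmod (f x))^2 + 2 * (cmod (g x))^2)"
    unfolding L2_sqnorm_def
    by (rule integral_mono)
       (use assms sq_integrable_add[OF assms] in \<open>auto simp: sq_integrable_def cmod_add_sq_le\<close>)
  also have "\<dots> = 2 * L2_sqnorm M f + 2 * L2_sqnorm M g"
    using assms unfolding L2_sqnorm_def sq_integrable_def by simp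
  finally show ?thesis .
qed

section \<open>Orthonormal systems\<close>

definition orthonormal :: "'a measure \<Rightarrow> ('i \<Rightarrow> 'a \<Rightarrow> complex) \<Rightarrow> 'i set \<Rightarrow> bool" where
  "orthonormal M u A \<longleftrightarrow> (\<forall>i\<in>A. sq_integrable M (u i)) \<and>
     (\<forall>i\<in>A. \<forall>j\<in>A. L2_inner M (u i) (u j) = (if i = j then 1 else 0))"

lemma orthonormal_sq_integrable: "orthonormal M u A \<Longrightarrow> i \<in> A \<Longrightarrow> sq_integrable M (u i)"
  unfolding orthonormal_def by blast

lemma orthonormal_inner:
  "orthonormal M u A \<Longrightarrow> i \<in> A \<Longrightarrow> j \<in> A \<Longrightarrow> L2_inner M (u i) (u j) = (if i = j then 1 else 0)"
  unfolding orthonormal_def by blast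

lemma sq_integrable_orthonormal_sum:
  "orthonormal M u A \<Longrightarrow> F \<subseteq> A \<Longrightarrow> sq_integrable M (\<lambda>x. \<Sum>i\<in>F. c i * u i x)"
  by (intro sq_integrable_sum sq_integrable_scale) (auto intro: orthonormal_sq_integrable)

lemma L2_inner_orthonormal_sums:
  assumes on: "orthonormal M u A" and F: "finite F" "F \<subseteq> A"
  shows "L2_inner M (\<lambda>x. \<Sum>i\<in>F. c i * u i x) (\<lambda>x. \<Sum>i\<in>F. d i * u i x) = (\<Sum>i\<in>F. c i * cnj (d i))"
proof -
  have u: "\<And>i. i \<in> F \<Longrightarrow> sq_integrable M (u i)"
    using F by (auto intro: orthonormal_sq_integrable[OF on])
  have cu: "\<And>i. i \<in> F \<Longrightarrow> sq_integrable M (\<lambda>x. c i * u i x)"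
    by (rule sq_integrable_scale[OF u])
  have du: "\<And>i. i \<in> F \<Longrightarrow> sq_integrable M (\<lambda>x. d i * u i x)"
    by (rule sq_integrable_scale[OF u])
  have "L2_inner M (\<lambda>x. \<Sum>i\<in>F. c i * u i x) (\<lambda>x. \<Sum>i\<in>F. d i * u i x)
      = (\<Sum>i\<in>F. c i * (\<Sum>j\<in>F. cnj (d j) * L2_inner M (u i) (u j)))"
    by (simp add: L2_inner_sum_left[OF cu sq_integrable_orthonormal_sum[OF on F(2)]]
        L2_inner_sum_right[OF du u] L2_inner_scale_left L2_inner_scale_right)
  also have "\<dots> = (\<Sum>i\<in>F. c i * cnj (d i))"
  proof (intro sum.cong refl)
    fix i assume i: "i \<in> F"
    have "L2_inner M (u i) (u j) = (if i = j then 1 else 0)" if "j \<in> F" for j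
      using F i that orthonormal_inner[OF on, of i j] by blast
    then have "(\<Sum>j\<in>F. cnj (d j) * L2_inner M (u i) (u j)) = (\<Sum>j\<in>F. if j = i then cnj (d j) else 0)"
      by (intro sum.cong refl) auto
    then show "c i * (\<Sum>j\<in>F. cnj (d j) * L2_inner M (u i) (u j)) = c i * cnj (d i)"
      using F i by (simp add: sum.delta')
  qed
  finally show ?thesis .
qed

lemma L2_sqnorm_diff_orthonormal_sum:
  assumes on: "orthonormal M u A" and F: "finite F" "F \<subseteq> A" and f: "sq_integrable M f"
  shows "L2_sqnorm M (\<lambda>x. f x - (\<Sum>i\<in>F. c i * u i x)) =
     L2_sqnorm M f - (\<Sum>i\<in>F. (cmod (L2_inner M f (u i)))^2)
       + (\<Sum>i\<in>F. (cmod (c i - L2_inner M f (u i)))^2)"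
proof -
  have u: "\<And>i. i \<in> F \<Longrightarrow> sq_integrable M (u i)"
    using F by (auto intro: orthonormal_sq_integrable[OF on])
  have cu: "\<And>i. i \<in> F \<Longrightarrow> sq_integrable M (\<lambda>x. c i * u i x)"
    by (rule sq_integrable_scale[OF u])
  define S where "S = (\<lambda>x. \<Sum>i\<in>F. c i * u i x)"
  define a where "a i = L2_inner M f (u i)" for i
  have S: "sq_integrable M S"
    unfolding S_def using F(2) by (rule sq_integrable_orthonormal_sum[OF on])
  have fS: "L2_inner M f S = (\<Sum>i\<in>F. cnj (c i) * a i)"
    unfolding S_def a_def by (simp add: L2_inner_sum_right[OF cu f] L2_inner_scale_right)
  have Sf: "L2_inner M S f = (\<Sum>i\<in>F. c i * cnj (a i))"
    unfolding S_def a_def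
    by (simp add: L2_inner_sum_left[OF cu f] L2_inner_scale_left L2_inner_cnj[of M "u i" f for i])
  have SS: "L2_inner M S S = (\<Sum>i\<in>F. c i * cnj (c i))"
    unfolding S_def by (rule L2_inner_orthonormal_sums[OF on F])
  have "complex_of_real (L2_sqnorm M (\<lambda>x. f x - S x))
      = L2_inner M f f - L2_inner M f S - L2_inner M S f + L2_inner M S S"
    using f S sq_integrable_diff[OF f S]
    by (simp add: L2_inner_self[symmetric] L2_inner_diff_left L2_inner_diff_right)
  also have "\<dots> = L2_inner M f f - (\<Sum>i\<in>F. a i * cnj (a i)) + (\<Sum>i\<in>F. (c i - a i) * cnj (c i - a i))"
    unfolding fS Sf SS by (simp add: algebra_simps sum.distrib sum_subtractf)
  also have "\<dots> = complex_of_real (L2_sqnorm M f - (\<Sum>i\<in>F. (cmod (a i))^2)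
      + (\<Sum>i\<in>F. (cmod (c i - a i))^2))"
    by (simp add: L2_inner_self complex_of_real_cmod_sq del: of_real_power)
  finally show ?thesis unfolding S_def a_def of_real_eq_iff .
qed

lemma bessel_inequality:
  assumes "orthonormal M u A" "finite F" "F \<subseteq> A" "sq_integrable M f"
  shows "(\<Sum>i\<in>F. (cmod (L2_inner M f (u i)))^2) \<le> L2_sqnorm M f"
  using L2_sqnorm_diff_orthonormal_sum[OF assms, of "\<lambda>i. L2_inner M f (u i)"]
    L2_sqnorm_nonneg[of M "\<lambda>x. f x - (\<Sum>i\<in>F. L2_inner M f (u i) * u i x)"] by simp

lemma L2_sqnorm_orthonormal_sum:
  assumes "orthonormal M u A" "finite F" "F \<subseteq> A"
  shows "L2_sqnorm M (\<lambda>x. \<Sum>i\<in>F. c i * u i x) = (\<Sum>i\<in>F. (cmod (c i))^2)"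
proof -
  have "complex_of_real (L2_sqnorm M (\<lambda>x. \<Sum>i\<in>F. c i * u i x)) = complex_of_real (\<Sum>i\<in>F. (cmod (c i))^2)"
    using L2_inner_orthonormal_sums[OF assms, of c c]
    by (simp add: L2_inner_self[symmetric] complex_of_real_cmod_sq del: of_real_power)
  then show ?thesis by (simp only: of_real_eq_iff)
qed

section \<open>Square sums of coefficients\<close>

definition sq_sum :: "('i \<Rightarrow> complex) \<Rightarrow> 'i set \<Rightarrow> real" where
  "sq_sum c F = (\<Sum>i\<in>F. (cmod (c i))^2)"

text \<open>It is only meaningful when the
  finite partial sums are bounded, which is why the lemmas about it carry that hypothesis.\<close>

definition sq_sum_sup :: "('i \<Rightarrow> complex) \<Rightarrow> 'i set \<Rightarrow> real" where
  "sq_sum_sup c A = (SUP F\<in>{F. finite F \<and> F \<subseteq> A}. sq_sum c F)"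

lemma sq_sum_mono: "finite G \<Longrightarrow> F \<subseteq> G \<Longrightarrow> sq_sum c F \<le> sq_sum c G"
  unfolding sq_sum_def by (rule sum_mono2) auto

lemma sq_sum_union:
  "finite F \<Longrightarrow> finite G \<Longrightarrow> F \<inter> G = {} \<Longrightarrow> sq_sum c (F \<union> G) = sq_sum c F + sq_sum c G"
  unfolding sq_sum_def by (rule sum.union_disjoint)

context
  fixes c :: "'i \<Rightarrow> complex" and A :: "'i set" and K :: real
  assumes bounded: "\<And>F. finite F \<Longrightarrow> F \<subseteq> A \<Longrightarrow> sq_sum c F \<le> K"
begin

lemma sq_sum_le_sup: "finite F \<Longrightarrow> F \<subseteq> A \<Longrightarrow> sq_sum c F \<le> sq_sum_sup c A"
  unfolding sq_sum_sup_def by (rule cSUP_upper) (auto simp: bdd_above_def intro: bounded)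

lemma sq_sum_sup_le: "sq_sum_sup c A \<le> K"
  unfolding sq_sum_sup_def using bounded by (intro cSUP_least) auto

lemma sq_sum_sup_approx:
  assumes "e > 0"
  obtains F where "finite F" "F \<subseteq> A" "sq_sum_sup c A - sq_sum c F < e"
proof -
  have "\<exists>F\<in>{F. finite F \<and> F \<subseteq> A}. sq_sum_sup c A - e < sq_sum c F"
    unfolding sq_sum_sup_def using assms by (intro less_cSUP_iff[THEN iffD1]) (auto intro: bounded)
  then show ?thesis using that by force
qed

end

section \<open>Closed linear spans and Parseval's identity\<close>

definition lin_comb :: "('i \<Rightarrow> 'a \<Rightarrow> complex) \<Rightarrow> 'i set \<Rightarrow> ('a \<Rightarrow> complex) set" where
  "lin_comb u A = {(\<lambda>x. \<Sum>i\<in>F. c i * u i x) | F c. finite F \<and> F \<subseteq> A}"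

definition L2_closure :: "'a measure \<Rightarrow> ('a \<Rightarrow> complex) set \<Rightarrow> ('a \<Rightarrow> complex) set" where
  "L2_closure M P = {f. sq_integrable M f \<and> (\<forall>e>0. \<exists>p\<in>P. L2_sqnorm M (\<lambda>x. f x - p x) < e)}"

lemma sum_if_mem: "finite H \<Longrightarrow> G \<subseteq> H \<Longrightarrow> (\<Sum>i\<in>H. if i \<in> G then f i else 0) = sum f G"
  by (metis sum.inter_restrict Int_absorb1)

lemma lin_comb_lincomb:
  assumes "p \<in> lin_comb u A" "q \<in> lin_comb u A"
  shows "(\<lambda>x. a * p x + b * q x) \<in> lin_comb u A"
proof -
  obtain F c G d where FG: "finite F" "F \<subseteq> A" "finite G" "G \<subseteq> A"
    and pq: "p = (\<lambda>x. \<Sum>i\<in>F. c i * u i x)" "q = (\<lambda>x. \<Sum>i\<in>G. d i * u i x)"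
    using assms unfolding lin_comb_def by blast
  define e where "e i = a * (if i \<in> F then c i else 0) + b * (if i \<in> G then d i else 0)" for i
  have "e i * u i x = a * (if i \<in> F then c i * u i x else 0)
      + b * (if i \<in> G then d i * u i x else 0)" for i x
    by (simp add: e_def algebra_simps)
  then have "(\<Sum>i\<in>F \<union> G. e i * u i x) = a * p x + b * q x" for x
    using FG by (simp add: sum.distrib flip: sum_distrib_left) (simp add: pq sum_if_mem)
  then show ?thesis
    unfolding lin_comb_def using FG by (intro CollectI exI[of _ "F \<union> G"] exI[of _ e]) auto
qed

lemma sq_integrable_lin_comb:
  assumes u: "\<And>i. i \<in> A \<Longrightarrow> sq_integrable M (u i)" and p: "p \<in> lin_comb u A"
  shows "sq_integrable M p"
proof -
  obtain F c where F: "F \<subseteq> A" and p_eq: "p = (\<lambda>x. \<Sum>i\<in>F. c i * u i x)"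
    using p unfolding lin_comb_def by blast
  have "sq_integrable M (\<lambda>x. \<Sum>i\<in>F. c i * u i x)"
    using F by (intro sq_integrable_sum sq_integrable_scale) (auto intro: u)
  then show ?thesis by (simp only: p_eq)
qed

lemma lin_comb_subset_L2_closure:
  assumes "\<And>i. i \<in> A \<Longrightarrow> sq_integrable M (u i)"
  shows "lin_comb u A \<subseteq> L2_closure M (lin_comb u A)"
proof
  fix p assume p: "p \<in> lin_comb u A"
  have "sq_integrable M p" by (rule sq_integrable_lin_comb[of A M u p, OF assms p])
  moreover have "L2_sqnorm M (\<lambda>x. 0) = 0" by (simp add: L2_sqnorm_def)
  ultimately show "p \<in> L2_closure M (lin_comb u A)"
    using p unfolding L2_closure_def by (auto intro!: bexI[of _ p])
qed

lemma orthonormal_in_lin_comb: "i \<in> A \<Longrightarrow> u i \<in> lin_comb u A"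
  unfolding lin_comb_def by (intro CollectI exI[of _ "{i}"] exI[of _ "\<lambda>_. 1"]) auto

lemma L2_closure_lincomb:
  assumes P: "\<And>p q. p \<in> P \<Longrightarrow> q \<in> P \<Longrightarrow> (\<lambda>x. a * p x + b * q x) \<in> P"
    and P_sq: "\<And>p. p \<in> P \<Longrightarrow> sq_integrable M p"
    and f: "f \<in> L2_closure M P" and g: "g \<in> L2_closure M P"
  shows "(\<lambda>x. a * f x + b * g x) \<in> L2_closure M P"
proof -
  have fsq: "sq_integrable M f" and gsq: "sq_integrable M g"
    using f g by (auto simp: L2_closure_def)
  have "\<exists>r\<in>P. L2_sqnorm M (\<lambda>x. a * f x + b * g x - r x) < e" if e: "e > 0" for e
  proof -
    define d where "d = e / (2 * (1 + (cmod a)^2 + (cmod b)^2))"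
    have pos: "2 * (1 + (cmod a)^2 + (cmod b)^2) > 0" by (simp add: add_pos_nonneg)
    then have d: "d > 0" using e by (simp add: d_def)
    obtain p q where pq: "p \<in> P" "q \<in> P"
      and p: "L2_sqnorm M (\<lambda>x. f x - p x) < d" and q: "L2_sqnorm M (\<lambda>x. g x - q x) < d"
      using f g d unfolding L2_closure_def by blast
    have fp: "sq_integrable M (\<lambda>x. f x - p x)" and gq: "sq_integrable M (\<lambda>x. g x - q x)"
      using fsq gsq pq by (auto intro: sq_integrable_diff P_sq)
    have "L2_sqnorm M (\<lambda>x. a * f x + b * g x - (a * p x + b * q x))
        = L2_sqnorm M (\<lambda>x. a * (f x - p x) + b * (g x - q x))"
      by (simp add: algebra_simps)
    also have "\<dots> \<le> 2 * ((cmod a)^2 * L2_sqnorm M (\<lambda>x. f x - p x))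
        + 2 * ((cmod b)^2 * L2_sqnorm M (\<lambda>x. g x - q x))"
      using L2_sqnorm_add_le[OF sq_integrable_scale[OF fp] sq_integrable_scale[OF gq], of a b]
      by (simp add: L2_sqnorm_scale)
    also have "\<dots> \<le> 2 * ((cmod a)^2 * d) + 2 * ((cmod b)^2 * d)"
      using p q by (intro add_mono mult_left_mono) auto
    also have "\<dots> = 2 * (1 + (cmod a)^2 + (cmod b)^2) * d - 2 * d"
      by (simp add: algebra_simps)
    also have "\<dots> = e - 2 * d"
      using pos unfolding d_def by simp
    also have "\<dots> < e" using d by simp
    finally show ?thesis using P[OF pq] by (intro bexI[of _ "\<lambda>x. a * p x + b * q x"]) auto
  qed
  moreover have "sq_integrable M (\<lambda>x. a * f x + b * g x)"
    by (intro sq_integrable_add sq_integrable_scale fsq gsq)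
  ultimately show ?thesis unfolding L2_closure_def by blast
qed

lemma L2_closure_lin_comb_lincomb:
  assumes u: "\<And>i. i \<in> A \<Longrightarrow> sq_integrable M (u i)"
    and f: "f \<in> L2_closure M (lin_comb u A)" and g: "g \<in> L2_closure M (lin_comb u A)"
  shows "(\<lambda>x. a * f x + b * g x) \<in> L2_closure M (lin_comb u A)"
  by (rule L2_closure_lincomb[OF lin_comb_lincomb sq_integrable_lin_comb[of A M u, OF u] f g])

lemma parseval_identity:
  assumes on: "orthonormal M u A" and f: "f \<in> L2_closure M (lin_comb u A)"
  shows "sq_sum_sup (\<lambda>i. L2_inner M f (u i)) A = L2_sqnorm M f"
proof -
  define c where "c i = L2_inner M f (u i)" for i
  have fsq: "sq_integrable M f" using f by (simp add: L2_closure_def)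
  have bnd: "sq_sum c F \<le> L2_sqnorm M f" if "finite F" "F \<subseteq> A" for F
    unfolding sq_sum_def c_def by (rule bessel_inequality[OF on that fsq])
  have "L2_sqnorm M f \<le> sq_sum_sup c A"
  proof (rule field_le_epsilon)
    fix e :: real assume "e > 0"
    then obtain p where p: "p \<in> lin_comb u A" "L2_sqnorm M (\<lambda>x. f x - p x) < e"
      using f unfolding L2_closure_def by blast
    then obtain F d where F: "finite F" "F \<subseteq> A" and pd: "p = (\<lambda>x. \<Sum>i\<in>F. d i * u i x)"
      unfolding lin_comb_def by blast
    have "L2_sqnorm M (\<lambda>x. f x - p x) = L2_sqnorm M f - sq_sum c F + (\<Sum>i\<in>F. (cmod (d i - c i))^2)"
      unfolding pd sq_sum_def c_def by (rule L2_sqnorm_diff_orthonormal_sum[OF on F fsq])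
    moreover have "(\<Sum>i\<in>F. (cmod (d i - c i))^2) \<ge> 0" by (simp add: sum_nonneg)
    moreover have "sq_sum c F \<le> sq_sum_sup c A" using bnd F by (rule sq_sum_le_sup)
    ultimately show "L2_sqnorm M f \<le> sq_sum_sup c A + e" using p(2) by linarith
  qed
  moreover have "sq_sum_sup c A \<le> L2_sqnorm M f" using bnd by (rule sq_sum_sup_le)
  ultimately show ?thesis unfolding c_def by simp
qed

lemma L2_closure_AE_eq_if_inner_eq:
  assumes on: "orthonormal M u A"
    and f: "f \<in> L2_closure M (lin_comb u A)" and g: "g \<in> L2_closure M (lin_comb u A)"
    and coeffs: "\<And>i. i \<in> A \<Longrightarrow> L2_inner M f (u i) = L2_inner M g (u i)"
  shows "AE x in M. f x = g x"
proof -
  define h where "h x = f x - g x" for x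
  have "(\<lambda>x. 1 * f x + (-1) * g x) \<in> L2_closure M (lin_comb u A)"
    by (rule L2_closure_lin_comb_lincomb[of A M u, OF orthonormal_sq_integrable[OF on] f g])
  then have h: "h \<in> L2_closure M (lin_comb u A)" by (simp add: h_def[abs_def])
  have fsq: "sq_integrable M f" and gsq: "sq_integrable M g" and hsq: "sq_integrable M h"
    using f g h by (auto simp: L2_closure_def)
  have "L2_inner M h (u i) = 0" if "i \<in> A" for i
    using coeffs[OF that] orthonormal_sq_integrable[OF on that] unfolding h_def[abs_def]
    by (simp add: L2_inner_diff_left[OF fsq gsq])
  then have "sq_sum_sup (\<lambda>i. L2_inner M h (u i)) A \<le> 0"
    by (intro sq_sum_sup_le) (auto simp: sq_sum_def subset_iff)
  then have "L2_sqnorm M h = 0"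
    using parseval_identity[OF on h] L2_sqnorm_nonneg[of M h] by simp
  then have "AE x in M. h x = 0" by (rule L2_sqnorm_eq_0_AE[OF hsq])
  then show ?thesis unfolding h_def by simp
qed

section \<open>The Riesz--Fischer theorem\<close>

lemma nn_integral_cmod_le_L2_norm:
  assumes N: "prob_space N" and h: "sq_integrable N h"
  shows "(\<integral>\<^sup>+x. ennreal (cmod (h x)) \<partial>N) \<le> ennreal (L2_norm N h)"
proof -
  have [measurable]: "h \<in> borel_measurable N" using h by (rule sq_integrable_measurable)
  have "(\<integral>\<^sup>+x. ennreal (cmod (h x)) * 1 \<partial>N)^2 \<le>
        (\<integral>\<^sup>+x. (ennreal (cmod (h x)))^2 \<partial>N) * (\<integral>\<^sup>+x. 1^2 \<partial>N)"
    by (rule Cauchy_Schwarz_nn_integral) auto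
  also have "(\<integral>\<^sup>+x. 1^2 \<partial>N) = 1"
    using prob_space.emeasure_space_1[OF N] by simp
  also have "(\<integral>\<^sup>+x. (ennreal (cmod (h x)))^2 \<partial>N) = (\<integral>\<^sup>+x. ennreal ((cmod (h x))^2) \<partial>N)"
    by (simp add: ennreal_power)
  also have "\<dots> = ennreal (L2_sqnorm N h)"
    unfolding L2_sqnorm_def using h by (intro nn_integral_eq_integral) (auto simp: sq_integrable_def)
  also have "L2_sqnorm N h = (L2_norm N h)^2"
    by (simp add: L2_norm_eq_sqrt L2_sqnorm_nonneg)
  finally have sq: "(\<integral>\<^sup>+x. ennreal (cmod (h x)) \<partial>N)^2 \<le> ennreal ((L2_norm N h)^2)" by simp
  show ?thesis
  proof (cases "\<integral>\<^sup>+x. ennreal (cmod (h x)) \<partial>N")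
    case (real r)
    with sq have "ennreal (r^2) \<le> ennreal ((L2_norm N h)^2)"
      by (simp add: ennreal_power)
    then have "r^2 \<le> (L2_norm N h)^2" by (simp add: ennreal_le_iff)
    then have "r \<le> L2_norm N h" by (rule power2_le_imp_le) (simp add: L2_norm_eq_sqrt L2_sqnorm_nonneg)
    then show ?thesis using real by (simp add: ennreal_leI)
  qed (use sq in \<open>simp add: ennreal_power[symmetric] top_unique\<close>)
qed

lemma AE_convergent_if_summable_L2_increments:
  assumes N: "prob_space N" and S: "\<And>j. sq_integrable N (S j)"
    and incr: "\<And>j. L2_norm N (\<lambda>x. S (Suc j) x - S j x) \<le> b j" and b: "summable b"
  shows "AE x in N. convergent (\<lambda>j. S j x)"
proof -
  define D where "D j x = S (Suc j) x - S j x" for j x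
  have D: "sq_integrable N (D j)" for j
    unfolding D_def[abs_def] by (intro sq_integrable_diff S)
  have [measurable]: "D j \<in> borel_measurable N" for j
    using D by (rule sq_integrable_measurable)
  have b_nonneg: "0 \<le> b j" for j
    using incr[of j] L2_norm_eq_sqrt[of N] by (metis real_sqrt_ge_zero L2_sqnorm_nonneg order_trans)
  have "(\<integral>\<^sup>+x. (\<Sum>j. ennreal (cmod (D j x))) \<partial>N) = (\<Sum>j. \<integral>\<^sup>+x. ennreal (cmod (D j x)) \<partial>N)"
    by (rule nn_integral_suminf) measurable
  also have "\<dots> \<le> (\<Sum>j. ennreal (b j))"
  proof (intro suminf_le allI)
    fix j
    show "(\<integral>\<^sup>+x. ennreal (cmod (D j x)) \<partial>N) \<le> ennreal (b j)"
      using nn_integral_cmod_le_L2_norm[OF N D] ennreal_leI[OF incr[of j]] unfolding D_def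
      by (rule order_trans)
  qed auto
  also have "\<dots> = ennreal (suminf b)"
    using b b_nonneg by (intro suminf_ennreal2) auto
  finally have fin: "(\<integral>\<^sup>+x. (\<Sum>j. ennreal (cmod (D j x))) \<partial>N) \<noteq> \<infinity>"
    unfolding infinity_ennreal_def by (rule neq_top_trans[OF ennreal_neq_top])
  have "AE x in N. (\<Sum>j. ennreal (cmod (D j x))) \<noteq> \<infinity>"
    by (rule nn_integral_PInf_AE[OF _ fin]) measurable
  then show ?thesis
  proof (rule AE_mp, intro AE_I2 impI)
    fix x assume "(\<Sum>j. ennreal (cmod (D j x))) \<noteq> \<infinity>"
    then have "summable (\<lambda>j. cmod (D j x))"
      by (intro summable_suminf_not_top) (auto simp: top_unique)
    then have "summable (\<lambda>j. D j x)" by (rule summable_norm_cancel)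
    then have "(\<lambda>n. S 0 x + (\<Sum>j<n. D j x)) \<longlonglongrightarrow> S 0 x + suminf (\<lambda>j. D j x)"
      by (intro tendsto_add tendsto_const summable_LIMSEQ)
    moreover have "S 0 x + (\<Sum>j<n. D j x) = S n x" for n
      unfolding D_def using sum_lessThan_telescope[of "\<lambda>j. S j x" n] by simp
    ultimately show "convergent (\<lambda>j. S j x)" by (auto simp: convergent_def)
  qed
qed

lemma L2_sqnorm_AE_limit_le:
  assumes f: "\<And>j. sq_integrable N (f j)" and g: "g \<in> borel_measurable N"
    and lim: "AE x in N. (\<lambda>j. f j x) \<longlonglongrightarrow> g x"
    and bound: "\<And>j. L2_sqnorm N (f j) \<le> b j" and b: "b \<longlonglongrightarrow> B"
  shows "sq_integrable N g" and "L2_sqnorm N g \<le> B"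
proof -
  have [measurable]: "f j \<in> borel_measurable N" for j using f by (rule sq_integrable_measurable)
  have [measurable]: "g \<in> borel_measurable N" by (rule g)
  have sqnorm: "(\<integral>\<^sup>+x. ennreal ((cmod (f j x))^2) \<partial>N) = ennreal (L2_sqnorm N (f j))" for j
    unfolding L2_sqnorm_def using f by (intro nn_integral_eq_integral) (auto simp: sq_integrable_def)
  have "(\<integral>\<^sup>+x. ennreal ((cmod (g x))^2) \<partial>N) = (\<integral>\<^sup>+x. liminf (\<lambda>j. ennreal ((cmod (f j x))^2)) \<partial>N)"
    using lim
  proof (intro nn_integral_cong_AE, eventually_elim)
    case (elim x)
    then have "(\<lambda>j. ennreal ((cmod (f j x))^2)) \<longlonglongrightarrow> ennreal ((cmod (g x))^2)"
      by (intro tendsto_ennrealI tendsto_power tendsto_norm)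
    from lim_imp_Liminf[OF _ this] show ?case by simp
  qed
  also have "\<dots> \<le> liminf (\<lambda>j. \<integral>\<^sup>+x. ennreal ((cmod (f j x))^2) \<partial>N)"
    by (rule nn_integral_liminf) measurable
  also have "\<dots> \<le> liminf (\<lambda>j. ennreal (b j))"
    unfolding sqnorm using bound by (intro Liminf_mono always_eventually allI ennreal_leI) auto
  also have "\<dots> = ennreal B"
    using b by (intro lim_imp_Liminf tendsto_ennrealI) auto
  finally have le: "(\<integral>\<^sup>+x. ennreal ((cmod (g x))^2) \<partial>N) \<le> ennreal B" .
  then have "integrable N (\<lambda>x. (cmod (g x))^2)"
    by (intro integrableI_bounded) (auto simp: order_le_less_trans)
  then show gsq: "sq_integrable N g" by (simp add: sq_integrable_def)
  have "ennreal (L2_sqnorm N g) \<le> ennreal B"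
    using le gsq unfolding L2_sqnorm_def
    by (subst nn_integral_eq_integral[symmetric]) (auto simp: sq_integrable_def)
  moreover have "0 \<le> B"
    using order_trans[OF L2_sqnorm_nonneg bound] by (intro LIMSEQ_le_const[OF b]) auto
  ultimately show "L2_sqnorm N g \<le> B" by (simp add: ennreal_le_iff)
qed

lemma L2_sqnorm_diff_orthonormal_sums:
  assumes on: "orthonormal M u A" and G: "finite G" "G \<subseteq> A" and F: "finite F" "F \<subseteq> A"
  shows "L2_sqnorm M (\<lambda>x. (\<Sum>i\<in>G. c i * u i x) - (\<Sum>i\<in>F. c i * u i x))
    = sq_sum c (G - F) + sq_sum c (F - G)"
proof -
  define d where "d i = (if i \<in> G then c i else 0) - (if i \<in> F then c i else 0)" for i
  have "d i * u i x = (if i \<in> G then c i * u i x else 0) - (if i \<in> F then c i * u i x else 0)" for i x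
    by (simp add: d_def left_diff_distrib)
  then have "(\<Sum>i\<in>G. c i * u i x) - (\<Sum>i\<in>F. c i * u i x) = (\<Sum>i\<in>G \<union> F. d i * u i x)" for x
    using G F by (simp add: sum_subtractf sum_if_mem)
  then have "L2_sqnorm M (\<lambda>x. (\<Sum>i\<in>G. c i * u i x) - (\<Sum>i\<in>F. c i * u i x))
      = (\<Sum>i\<in>G \<union> F. (cmod (d i))^2)"
    using G F by (simp add: L2_sqnorm_orthonormal_sum[OF on])
  also have "\<dots> = (\<Sum>i\<in>(G - F) \<union> (F - G). (cmod (c i))^2)"
    using G F by (intro sum.mono_neutral_cong_right) (auto simp: d_def)
  also have "\<dots> = sq_sum c (G - F) + sq_sum c (F - G)"
    unfolding sq_sum_def using G F by (intro sum.union_disjoint) auto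
  finally show ?thesis .
qed

lemma finite_subsets_exhausting_sq_sum:
  assumes bounded: "\<And>F. finite F \<Longrightarrow> F \<subseteq> A \<Longrightarrow> sq_sum c F \<le> K" and e: "\<And>j. e j > 0"
  obtains G where "\<And>j. finite (G j)" "\<And>j. G j \<subseteq> A" "incseq G"
    "\<And>j. sq_sum_sup c A - sq_sum c (G j) < e j"
proof -
  have "\<exists>F. finite F \<and> F \<subseteq> A \<and> sq_sum_sup c A - sq_sum c F < e j" for j
    using bounded e[of j] by (rule sq_sum_sup_approx) auto
  then obtain H where H: "\<And>j. finite (H j) \<and> H j \<subseteq> A \<and> sq_sum_sup c A - sq_sum c (H j) < e j"
    by metis
  define G where "G j = (\<Union>k\<le>j. H k)" for j
  have fin: "finite (G j)" and sub: "G j \<subseteq> A" for j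
    unfolding G_def using H by auto
  have "incseq G"
    unfolding G_def by (intro monoI UN_mono) auto
  moreover have "sq_sum_sup c A - sq_sum c (G j) < e j" for j
  proof -
    have "H j \<subseteq> G j" unfolding G_def by auto
    then show ?thesis using H[of j] sq_sum_mono[OF fin[of j], of "H j" c] by linarith
  qed
  ultimately show ?thesis using that fin sub by blast
qed

lemma sq_sum_diff_le:
  assumes bounded: "\<And>F. finite F \<Longrightarrow> F \<subseteq> A \<Longrightarrow> sq_sum c F \<le> K"
    and "finite H" "H \<subseteq> A" "finite F" "F \<subseteq> A"
  shows "sq_sum c (H - F) \<le> sq_sum_sup c A - sq_sum c F"
proof -
  have "sq_sum c (H \<union> F) = sq_sum c (H - F) + sq_sum c F"
    using assms(2-5) sq_sum_union[of "H - F" F c] by (simp add: Un_Diff_cancel2 Int_commute)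
  then show ?thesis
    using assms(2-5) sq_sum_le_sup[of A c K, OF bounded, of "H \<union> F"] by simp
qed

lemma orthonormal_partial_sums_AE_convergent:
  assumes N: "prob_space N" and on: "orthonormal N u A"
    and bounded: "\<And>F. finite F \<Longrightarrow> F \<subseteq> A \<Longrightarrow> sq_sum c F \<le> K"
    and G: "\<And>j. finite (G j)" "\<And>j. G j \<subseteq> A" "incseq G"
    and tail: "\<And>j. sq_sum_sup c A - sq_sum c (G j) < (1/4)^j"
  shows "AE x in N. convergent (\<lambda>j. \<Sum>i\<in>G j. c i * u i x)"
proof (rule AE_convergent_if_summable_L2_increments[OF N])
  show "sq_integrable N (\<lambda>x. \<Sum>i\<in>G j. c i * u i x)" for j
    by (rule sq_integrable_orthonormal_sum[OF on G(2)])
  show "L2_norm N (\<lambda>x. (\<Sum>i\<in>G (Suc j). c i * u i x) - (\<Sum>i\<in>G j. c i * u i x)) \<le> (1/2)^j" for j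
  proof -
    have empty: "G j - G (Suc j) = {}" using \<open>incseq G\<close> by (auto simp: incseq_Suc_iff)
    have "L2_sqnorm N (\<lambda>x. (\<Sum>i\<in>G (Suc j). c i * u i x) - (\<Sum>i\<in>G j. c i * u i x))
        = sq_sum c (G (Suc j) - G j)"
      unfolding L2_sqnorm_diff_orthonormal_sums[OF on G(1,2) G(1,2)] empty
      by (simp add: sq_sum_def)
    also have "\<dots> \<le> ((1/2)^j)^2"
      using sq_sum_diff_le[OF bounded G(1,2) G(1,2), of "Suc j" j] tail[of j]
      by (simp add: power_mult_distrib[symmetric] power2_eq_square)
    finally show ?thesis
      unfolding L2_norm_eq_sqrt by (rule real_le_lsqrt[rotated]) simp
  qed
qed simp

text \<open>The Riesz--Fischer limit: partial sums over an exhausting increasing sequence of finite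
  sets converge almost everywhere, and Fatou's lemma turns the tail bounds of the coefficients
  into \<open>L\<^sup>2\<close> bounds for the limit.\<close>

lemma orthonormal_series_limit_exists:
  assumes N: "prob_space N" and on: "orthonormal N u A"
    and bounded: "\<And>F. finite F \<Longrightarrow> F \<subseteq> A \<Longrightarrow> sq_sum c F \<le> K"
  obtains g where "sq_integrable N g"
    "\<And>F. finite F \<Longrightarrow> F \<subseteq> A \<Longrightarrow>
       L2_sqnorm N (\<lambda>x. g x - (\<Sum>i\<in>F. c i * u i x)) \<le> sq_sum_sup c A - sq_sum c F"
proof -
  define T where "T = sq_sum_sup c A"
  obtain G where G: "\<And>j. finite (G j)" "\<And>j. G j \<subseteq> A" "incseq G"
    and tail: "\<And>j. T - sq_sum c (G j) < (1/4)^j"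
    using finite_subsets_exhausting_sq_sum[of A c K "\<lambda>j. (1/4)^j"] bounded unfolding T_def by auto
  define S where "S j x = (\<Sum>i\<in>G j. c i * u i x)" for j x
  have S: "sq_integrable N (S j)" for j
    unfolding S_def[abs_def] by (rule sq_integrable_orthonormal_sum[OF on G(2)])
  have [measurable]: "S j \<in> borel_measurable N" for j using S by (rule sq_integrable_measurable)
  have "AE x in N. convergent (\<lambda>j. S j x)"
    unfolding S_def using orthonormal_partial_sums_AE_convergent[OF N on bounded G] tail
    unfolding T_def by blast
  then have lim: "AE x in N. (\<lambda>j. S j x) \<longlonglongrightarrow> lim (\<lambda>j. S j x)"
    by eventually_elim (simp add: convergent_LIMSEQ_iff)
  have approx: "sq_integrable N (\<lambda>x. lim (\<lambda>j. S j x) - (\<Sum>i\<in>F. c i * u i x))"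
      "L2_sqnorm N (\<lambda>x. lim (\<lambda>j. S j x) - (\<Sum>i\<in>F. c i * u i x)) \<le> T - sq_sum c F"
    if F: "finite F" "F \<subseteq> A" for F
  proof -
    define SF where "SF x = (\<Sum>i\<in>F. c i * u i x)" for x
    have SF: "sq_integrable N SF"
      unfolding SF_def[abs_def] by (rule sq_integrable_orthonormal_sum[OF on F(2)])
    have [measurable]: "SF \<in> borel_measurable N" using SF by (rule sq_integrable_measurable)
    have bound: "L2_sqnorm N (\<lambda>x. S j x - SF x) \<le> (T - sq_sum c F) + (1/4)^j" for j
      using L2_sqnorm_diff_orthonormal_sums[OF on G(1)[of j] G(2)[of j] F, of c]
        sq_sum_diff_le[OF bounded G(1)[of j] G(2)[of j] F]
        sq_sum_diff_le[OF bounded F G(1)[of j] G(2)[of j]] tail[of j]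
      unfolding S_def SF_def T_def by linarith
    have "(\<lambda>j. (T - sq_sum c F) + (1/4::real)^j) \<longlonglongrightarrow> (T - sq_sum c F) + 0"
      by (intro tendsto_add tendsto_const LIMSEQ_power_zero) simp
    then have conv: "(\<lambda>j. (T - sq_sum c F) + (1/4::real)^j) \<longlonglongrightarrow> T - sq_sum c F" by simp
    have lim_diff: "AE x in N. (\<lambda>j. S j x - SF x) \<longlonglongrightarrow> lim (\<lambda>j. S j x) - SF x"
      using lim by eventually_elim (intro tendsto_diff tendsto_const)
    have "(\<lambda>x. lim (\<lambda>j. S j x) - SF x) \<in> borel_measurable N" by measurable
    from L2_sqnorm_AE_limit_le[OF sq_integrable_diff[OF S SF] this lim_diff bound conv]
    show "sq_integrable N (\<lambda>x. lim (\<lambda>j. S j x) - (\<Sum>i\<in>F. c i * u i x))"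
        "L2_sqnorm N (\<lambda>x. lim (\<lambda>j. S j x) - (\<Sum>i\<in>F. c i * u i x)) \<le> T - sq_sum c F"
      unfolding SF_def by simp_all
  qed
  show ?thesis
  proof (rule that)
    show "sq_integrable N (\<lambda>x. lim (\<lambda>j. S j x))" using approx(1)[of "{}"] by simp
  qed (use approx(2) T_def in auto)
qed

lemma orthonormal_coeff_dist_le:
  assumes on: "orthonormal M u A" and F: "finite F" "F \<subseteq> A" "i \<in> F" and f: "sq_integrable M f"
  shows "(cmod (c i - L2_inner M f (u i)))^2 \<le> L2_sqnorm M (\<lambda>x. f x - (\<Sum>i\<in>F. c i * u i x))"
  using L2_sqnorm_diff_orthonormal_sum[OF on F(1,2) f, of c] bessel_inequality[OF on F(1,2) f]
    member_le_sum[OF F(3), of "\<lambda>i. (cmod (c i - L2_inner M f (u i)))^2"] F(1)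
  by simp

lemma riesz_fischer:
  assumes N: "prob_space N" and on: "orthonormal N u A"
    and bounded: "\<And>F. finite F \<Longrightarrow> F \<subseteq> A \<Longrightarrow> sq_sum c F \<le> K"
  obtains g where "g \<in> L2_closure N (lin_comb u A)" "\<And>i. i \<in> A \<Longrightarrow> L2_inner N g (u i) = c i"
proof -
  obtain g where g: "sq_integrable N g"
    and approx: "\<And>F. finite F \<Longrightarrow> F \<subseteq> A \<Longrightarrow>
       L2_sqnorm N (\<lambda>x. g x - (\<Sum>i\<in>F. c i * u i x)) \<le> sq_sum_sup c A - sq_sum c F"
    using orthonormal_series_limit_exists[OF N on bounded] by blast
  have close: "\<exists>F. finite F \<and> F \<subseteq> A
      \<and> (\<forall>G. finite G \<longrightarrow> F \<subseteq> G \<longrightarrow> G \<subseteq> A \<longrightarrow> L2_sqnorm N (\<lambda>x. g x - (\<Sum>i\<in>G. c i * u i x)) < e)"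
    if "e > 0" for e
  proof -
    obtain F where F: "finite F" "F \<subseteq> A" "sq_sum_sup c A - sq_sum c F < e"
      using bounded \<open>e > 0\<close> by (rule sq_sum_sup_approx)
    have "L2_sqnorm N (\<lambda>x. g x - (\<Sum>i\<in>G. c i * u i x)) < e" if "finite G" "F \<subseteq> G" "G \<subseteq> A" for G
      using approx[OF that(1,3)] sq_sum_mono[OF that(1,2), of c] F(3) by linarith
    then show ?thesis using F by blast
  qed
  show ?thesis
  proof (rule that)
    show "g \<in> L2_closure N (lin_comb u A)"
      unfolding L2_closure_def
    proof (intro CollectI conjI allI impI g)
      fix e :: real assume "e > 0"
      then obtain F where F: "finite F" "F \<subseteq> A"
        and "L2_sqnorm N (\<lambda>x. g x - (\<Sum>i\<in>F. c i * u i x)) < e"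
        using close by blast
      moreover have "(\<lambda>x. \<Sum>i\<in>F. c i * u i x) \<in> lin_comb u A"
        unfolding lin_comb_def using F by blast
      ultimately show "\<exists>p\<in>lin_comb u A. L2_sqnorm N (\<lambda>x. g x - p x) < e"
        by (intro bexI[of _ "\<lambda>x. \<Sum>i\<in>F. c i * u i x"])
    qed
  next
    fix i assume i: "i \<in> A"
    have "(cmod (c i - L2_inner N g (u i)))^2 \<le> 0 + e" if "e > 0" for e
    proof -
      obtain F where F: "finite F" "F \<subseteq> A"
        and small: "\<And>G. finite G \<Longrightarrow> F \<subseteq> G \<Longrightarrow> G \<subseteq> A \<Longrightarrow>
          L2_sqnorm N (\<lambda>x. g x - (\<Sum>i\<in>G. c i * u i x)) < e"
        using close[OF \<open>e > 0\<close>] by blast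
      have "(cmod (c i - L2_inner N g (u i)))^2
          \<le> L2_sqnorm N (\<lambda>x. g x - (\<Sum>i\<in>insert i F. c i * u i x))"
        by (rule orthonormal_coeff_dist_le[OF on]) (use F i g in auto)
      also have "\<dots> < e" by (rule small) (use F i in auto)
      finally show ?thesis by simp
    qed
    then have "(cmod (c i - L2_inner N g (u i)))^2 \<le> 0" by (rule field_le_epsilon)
    then show "L2_inner N g (u i) = c i" by simp
  qed
qed

section \<open>Isometries between closed spans\<close>

lemma sq_sum_sup_cong: "(\<And>i. i \<in> A \<Longrightarrow> c i = d i) \<Longrightarrow> sq_sum_sup c A = sq_sum_sup d A"
  unfolding sq_sum_sup_def sq_sum_def by (intro SUP_cong refl sum.cong) auto

lemma L2_inner_lincomb_left:
  assumes "sq_integrable M f" "sq_integrable M g" "sq_integrable M h"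
  shows "L2_inner M (\<lambda>x. a * f x + b * g x) h = a * L2_inner M f h + b * L2_inner M g h"
  using assms by (simp add: L2_inner_add_left sq_integrable_scale L2_inner_scale_left)

lemma coefficient_transfer_exists:
  assumes N: "prob_space N" and u: "orthonormal M u A" and v: "orthonormal N v A"
  obtains W where
    "\<And>f. f \<in> L2_closure M (lin_comb u A) \<Longrightarrow> W f \<in> L2_closure N (lin_comb v A)"
    "\<And>f i. f \<in> L2_closure M (lin_comb u A) \<Longrightarrow> i \<in> A \<Longrightarrow> L2_inner N (W f) (v i) = L2_inner M f (u i)"
proof -
  let ?P = "\<lambda>f g. g \<in> L2_closure N (lin_comb v A) \<and> (\<forall>i\<in>A. L2_inner N g (v i) = L2_inner M f (u i))"
  have ex: "\<exists>g. ?P f g" if f: "f \<in> L2_closure M (lin_comb u A)" for f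
  proof -
    have "sq_sum (\<lambda>i. L2_inner M f (u i)) F \<le> L2_sqnorm M f" if "finite F" "F \<subseteq> A" for F
      using f unfolding sq_sum_def L2_closure_def by (intro bessel_inequality[OF u that]) simp
    then obtain g where "g \<in> L2_closure N (lin_comb v A)" "\<And>i. i \<in> A \<Longrightarrow> L2_inner N g (v i) = L2_inner M f (u i)"
      using riesz_fischer[OF N v] by blast
    then show ?thesis by blast
  qed
  have "?P f (SOME g. ?P f g)" if "f \<in> L2_closure M (lin_comb u A)" for f
    by (rule someI_ex[OF ex[OF that]])
  then show ?thesis using that[of "\<lambda>f. SOME g. ?P f g"] by blast
qed

lemma orthonormal_isometry_exists:
  fixes u :: "'i \<Rightarrow> 'a \<Rightarrow> complex" and v :: "'i \<Rightarrow> 'b \<Rightarrow> complex"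
  assumes N: "prob_space N" and u: "orthonormal M u A" and v: "orthonormal N v A"
  defines "H \<equiv> L2_closure M (lin_comb u A)"
  shows "\<exists>W. (\<forall>f\<in>H. sq_integrable N (W f)) \<and>
    (\<forall>f\<in>H. \<forall>g\<in>H. \<forall>a b. AE y in N. W (\<lambda>x. a * f x + b * g x) y = a * W f y + b * W g y) \<and>
    (\<forall>f\<in>H. L2_norm N (W f) = L2_norm M f) \<and>
    (\<forall>i\<in>A. AE y in N. W (u i) y = v i y)"
proof -
  let ?H' = "L2_closure N (lin_comb v A)"
  obtain W where W_H': "\<And>f. f \<in> H \<Longrightarrow> W f \<in> ?H'"
    and W_coeff: "\<And>f i. f \<in> H \<Longrightarrow> i \<in> A \<Longrightarrow> L2_inner N (W f) (v i) = L2_inner M f (u i)"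
    using coefficient_transfer_exists[OF N u v] unfolding H_def by blast
  have f_sq: "sq_integrable M f" if "f \<in> H" for f
    using that by (simp add: H_def L2_closure_def)
  have W_sq: "sq_integrable N (W f)" if "f \<in> H" for f
    using W_H'[OF that] by (simp add: L2_closure_def)
  have u_H: "u i \<in> H" and v_H': "v i \<in> ?H'" if "i \<in> A" for i
    using lin_comb_subset_L2_closure[of A M u, OF orthonormal_sq_integrable[OF u]]
      lin_comb_subset_L2_closure[of A N v, OF orthonormal_sq_integrable[OF v]]
      orthonormal_in_lin_comb[OF that] unfolding H_def by auto
  show ?thesis
  proof (intro exI[of _ W] conjI ballI allI)
    fix f assume f: "f \<in> H"
    show "sq_integrable N (W f)" by (rule W_sq[OF f])
    have "L2_sqnorm N (W f) = L2_sqnorm M f"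
      using parseval_identity[OF v W_H'[OF f]] parseval_identity[OF u f[unfolded H_def]]
        sq_sum_sup_cong[of A "\<lambda>i. L2_inner N (W f) (v i)" "\<lambda>i. L2_inner M f (u i)"] W_coeff[OF f]
      by simp
    then show "L2_norm N (W f) = L2_norm M f" by (simp add: L2_norm_eq_sqrt)
  next
    fix f g a b assume f: "f \<in> H" and g: "g \<in> H"
    have fg: "(\<lambda>x. a * f x + b * g x) \<in> H"
      using L2_closure_lin_comb_lincomb[of A M u, OF orthonormal_sq_integrable[OF u]] f g
      unfolding H_def by blast
    show "AE y in N. W (\<lambda>x. a * f x + b * g x) y = a * W f y + b * W g y"
    proof (rule L2_closure_AE_eq_if_inner_eq[OF v W_H'[OF fg]])
      show "(\<lambda>y. a * W f y + b * W g y) \<in> ?H'"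
        by (rule L2_closure_lin_comb_lincomb[of A N v, OF orthonormal_sq_integrable[OF v] W_H'[OF f] W_H'[OF g]])
      fix i assume i: "i \<in> A"
      show "L2_inner N (W (\<lambda>x. a * f x + b * g x)) (v i) = L2_inner N (\<lambda>y. a * W f y + b * W g y) (v i)"
        using i by (simp add: W_coeff fg f g L2_inner_lincomb_left f_sq W_sq
            orthonormal_sq_integrable[OF u] orthonormal_sq_integrable[OF v])
    qed
  next
    fix i assume i: "i \<in> A"
    show "AE y in N. W (u i) y = v i y"
    proof (rule L2_closure_AE_eq_if_inner_eq[OF v W_H'[OF u_H[OF i]] v_H'[OF i]])
      fix j assume j: "j \<in> A"
      show "L2_inner N (W (u i)) (v j) = L2_inner N (v i) (v j)"
        using i j by (simp add: W_coeff u_H orthonormal_inner[OF u] orthonormal_inner[OF v])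
    qed
  qed
qed

lemma L2_sqnorm_lincomb:
  assumes f: "sq_integrable M f" and g: "sq_integrable M g"
  shows "complex_of_real (L2_sqnorm M (\<lambda>x. a * f x + b * g x)) =
    complex_of_real ((cmod a)^2 * L2_sqnorm M f + (cmod b)^2 * L2_sqnorm M g)
      + a * cnj b * L2_inner M f g + b * cnj a * L2_inner M g f"
proof -
  have af: "sq_integrable M (\<lambda>x. a * f x)" and bg: "sq_integrable M (\<lambda>x. b * g x)"
    using f g by (auto intro: sq_integrable_scale)
  have "complex_of_real (L2_sqnorm M (\<lambda>x. a * f x + b * g x))
      = L2_inner M (\<lambda>x. a * f x + b * g x) (\<lambda>x. a * f x + b * g x)"
    by (simp add: L2_inner_self)
  also have "\<dots> = a * cnj a * L2_inner M f f + a * cnj b * L2_inner M f g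
      + b * cnj a * L2_inner M g f + b * cnj b * L2_inner M g g"
    by (simp add: L2_inner_add_left[OF af bg] L2_inner_add_right[OF af bg] sq_integrable_add[OF af bg]
        L2_inner_scale_left L2_inner_scale_right algebra_simps f g)
  finally show ?thesis
    by (simp add: L2_inner_self complex_of_real_cmod_sq algebra_simps del: of_real_power)
qed

lemma L2_sqnorm_eq_if_isometry_AE:
  assumes W_sq: "\<forall>f\<in>H. sq_integrable N (W f)" and W_norm: "\<forall>f\<in>H. L2_norm N (W f) = L2_norm M f"
    and "f \<in> H" "sq_integrable N g" "AE y in N. W f y = g y"
  shows "L2_sqnorm M f = L2_sqnorm N g"
proof -
  have "L2_sqnorm N (W f) = L2_sqnorm N g"
    using assms by (intro L2_sqnorm_cong_AE) auto
  moreover have "L2_sqnorm N (W f) = L2_sqnorm M f"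
    using W_norm \<open>f \<in> H\<close> by (simp add: L2_norm_eq_sqrt L2_sqnorm_nonneg)
  ultimately show ?thesis by simp
qed

lemma orthogonal_if_isometry_onto_orthonormal:
  fixes u :: "'i \<Rightarrow> 'a \<Rightarrow> complex" and v :: "'i \<Rightarrow> 'b \<Rightarrow> complex"
  assumes v: "orthonormal N v A" and u: "\<And>i. i \<in> A \<Longrightarrow> sq_integrable M (u i)"
  defines "H \<equiv> L2_closure M (lin_comb u A)"
  assumes W_sq: "\<forall>f\<in>H. sq_integrable N (W f)"
    and W_lin: "\<forall>f\<in>H. \<forall>g\<in>H. \<forall>a b. AE y in N. W (\<lambda>x. a * f x + b * g x) y = a * W f y + b * W g y"
    and W_norm: "\<forall>f\<in>H. L2_norm N (W f) = L2_norm M f"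
    and W_u: "\<forall>i\<in>A. AE y in N. W (u i) y = v i y"
    and ij: "i \<in> A" "j \<in> A" "i \<noteq> j"
  shows "L2_inner M (u i) (u j) = 0"
proof -
  define z where "z = L2_inner M (u i) (u j)"
  have sub: "lin_comb u A \<subseteq> H"
    unfolding H_def by (rule lin_comb_subset_L2_closure, rule u)
  have u_H: "u k \<in> H" if "k \<in> A" for k
    using sub orthonormal_in_lin_comb[OF that] by blast
  note sqnorm_eq = L2_sqnorm_eq_if_isometry_AE[OF W_sq W_norm]
  have u_norm: "L2_sqnorm M (u k) = 1" if k: "k \<in> A" for k
  proof -
    have "L2_sqnorm M (u k) = L2_sqnorm N (v k)"
      using W_u k by (intro sqnorm_eq u_H orthonormal_sq_integrable[OF v]) auto
    moreover have "complex_of_real (L2_sqnorm N (v k)) = 1"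
      using orthonormal_inner[OF v k k] by (simp flip: L2_inner_self)
    ultimately show ?thesis by simp
  qed
  have "(\<lambda>x. 1 * u i x + z * u j x) \<in> lin_comb u A"
    using ij by (intro lin_comb_lincomb orthonormal_in_lin_comb)
  then have h_H: "(\<lambda>x. 1 * u i x + z * u j x) \<in> H" using sub by blast
  have "AE y in N. W (\<lambda>x. 1 * u i x + z * u j x) y = 1 * W (u i) y + z * W (u j) y"
    using W_lin u_H ij by blast
  moreover have "AE y in N. W (u i) y = v i y" "AE y in N. W (u j) y = v j y"
    using W_u ij by blast+
  ultimately have "AE y in N. W (\<lambda>x. 1 * u i x + z * u j x) y = 1 * v i y + z * v j y"
    by eventually_elim simp
  then have "L2_sqnorm M (\<lambda>x. 1 * u i x + z * u j x) = L2_sqnorm N (\<lambda>y. 1 * v i y + z * v j y)"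
    using ij by (intro sqnorm_eq h_H sq_integrable_add sq_integrable_scale orthonormal_sq_integrable[OF v])
  then have "complex_of_real (1 + (cmod z)^2) + cnj z * z + z * cnj z = complex_of_real (1 + (cmod z)^2)"
    using L2_sqnorm_lincomb[OF u u, of i j 1 z] L2_sqnorm_lincomb[OF orthonormal_sq_integrable[OF v]
        orthonormal_sq_integrable[OF v], of i j 1 z] ij
    by (simp add: u_norm orthonormal_inner[OF v] L2_inner_cnj[of M "u j"] z_def
        flip: L2_inner_self)
  then have "complex_of_real (2 * (cmod z)^2) = 0"
    by (simp add: complex_of_real_cmod_sq mult.commute del: of_real_power)
  then show ?thesis unfolding z_def by simp
qed

section \<open>Characters of the Bohr compactification\<close>

lemma bohr_group_mult:
  "psi \<in> bohr_group \<Longrightarrow> chi \<in> bohr_group \<Longrightarrow> (\<lambda>x. psi x * chi x) \<in> bohr_group"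
  unfolding bohr_group_def by (simp add: norm_mult)

lemma bohr_group_zero:
  assumes "chi \<in> bohr_group"
  shows "chi 0 = 1"
proof -
  have "chi (0 + 0) = chi 0 * chi 0" and "cmod (chi 0) = 1"
    using assms unfolding bohr_group_def by blast+
  then show ?thesis by (metis add_0 mult_cancel_left2 norm_zero zero_neq_one)
qed

lemma bohr_group_mult_cnj:
  assumes "chi \<in> bohr_group"
  shows "chi l * cnj (chi l') = chi (l - l')"
proof -
  have "chi ((l - l') + l') = chi (l - l') * chi l'" and "cmod (chi l') = 1"
    using assms unfolding bohr_group_def by blast+
  then show ?thesis by (simp add: mult.assoc complex_of_real_cmod_sq[symmetric])
qed

lemma evaluation_measurable_bohr_space: "(\<lambda>chi. chi l) \<in> borel_measurable bohr_space"
  unfolding bohr_space_def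
  by (rule measurable_restrict_space1) (rule measurable_component_singleton, simp)

context
  fixes MB :: "(real^'n \<Rightarrow> complex) measure"
  assumes MB: "bohr_haar MB"
begin

lemma bohr_haar_prob_space: "prob_space MB"
  using MB by (simp add: bohr_haar_def)

lemma bohr_haar_space: "space MB = bohr_group"
  using MB by (simp add: bohr_haar_def)

lemma measurable_bohr_haar: "measurable MB M = measurable bohr_space M"
  using MB by (intro measurable_cong_sets) (simp_all add: bohr_haar_def)

lemma bohr_translation_measurable:
  assumes psi: "psi \<in> bohr_group"
  shows "(\<lambda>chi x. psi x * chi x) \<in> measurable MB MB"
proof -
  have "measurable MB MB = measurable bohr_space bohr_space"
    using MB by (intro measurable_cong_sets) (simp_all add: bohr_haar_def)
  moreover have "(\<lambda>chi x. psi x * chi x) \<in> measurable bohr_space bohr_space"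
    unfolding bohr_space_def
  proof (rule measurable_restrict_space2)
    show "(\<lambda>chi x. psi x * chi x) \<in> space (restrict_space (Pi\<^sub>M UNIV (\<lambda>_. borel)) bohr_group) \<rightarrow> bohr_group"
      using bohr_group_mult[OF psi] by (auto simp: space_restrict_space)
    show "(\<lambda>chi x. psi x * chi x) \<in> restrict_space (Pi\<^sub>M UNIV (\<lambda>_. borel)) bohr_group \<rightarrow>\<^sub>M Pi\<^sub>M UNIV (\<lambda>_. borel)"
    proof (rule measurable_PiM_single')
      fix x :: "real^'n"
      show "(\<lambda>chi. psi x * chi x) \<in> borel_measurable (restrict_space (Pi\<^sub>M UNIV (\<lambda>_. borel)) bohr_group)"
        using evaluation_measurable_bohr_space[of x] unfolding bohr_space_def by measurable
    qed auto
  qed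
  ultimately show ?thesis by simp
qed

lemma bohr_haar_integral_character:
  assumes d: "d \<noteq> 0"
  shows "(LINT chi|MB. chi d) = 0"
proof -
  define s where "s = (1 / (2 * (d \<bullet> d))) *\<^sub>R d"
  have "s \<bullet> d = 1/2" using d by (simp add: s_def)
  define psi where "psi x = cis (2 * pi * (s \<bullet> x))" for x :: "real^'n"
  have psi: "psi \<in> bohr_group"
    unfolding bohr_group_def psi_def by (simp add: inner_add_right distrib_left cis_mult)
  have psi_d: "psi d = -1" unfolding psi_def \<open>s \<bullet> d = 1/2\<close> by simp
  have "(LINT chi|MB. chi d) = (LINT chi|distr MB MB (\<lambda>chi x. psi x * chi x). chi d)"
    using MB psi by (simp add: bohr_haar_def)
  also have "\<dots> = (LINT chi|MB. psi d * chi d)"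
    by (rule integral_distr[OF bohr_translation_measurable[OF psi]])
       (simp add: measurable_bohr_haar evaluation_measurable_bohr_space)
  also have "\<dots> = - (LINT chi|MB. chi d)" by (simp add: psi_d)
  finally show ?thesis by simp
qed

lemma orthonormal_bohr_characters: "orthonormal MB (\<lambda>l chi. chi l) A"
proof -
  interpret prob_space MB by (rule bohr_haar_prob_space)
  have ev: "sq_integrable MB (\<lambda>chi. chi l)" for l
  proof -
    have "integrable MB (\<lambda>chi. (cmod (chi l))^2) \<longleftrightarrow> integrable MB (\<lambda>chi. 1::real)"
      by (intro Bochner_Integration.integrable_cong) (auto simp: bohr_haar_space bohr_group_def)
    then show ?thesis
      by (simp add: sq_integrable_def measurable_bohr_haar evaluation_measurable_bohr_space)
  qed
  have "L2_inner MB (\<lambda>chi. chi i) (\<lambda>chi. chi j) = (LINT chi|MB. chi (i - j))" for i j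
    unfolding L2_inner_def
    by (intro Bochner_Integration.integral_cong) (auto simp: bohr_haar_space bohr_group_mult_cnj)
  moreover have "(LINT chi|MB. chi 0) = 1"
    by (subst Bochner_Integration.integral_cong[OF refl, of _ _ "\<lambda>_. 1"])
       (auto simp: bohr_haar_space bohr_group_zero prob_space[unfolded bohr_haar_space])
  ultimately show ?thesis
    using bohr_haar_integral_character ev unfolding orthonormal_def by auto
qed

end

section \<open>Exponentials in \<open>L\<^sup>2(\<mu>)\<close>\<close>

lemma nn_integral_count_space_le_iff_finite_sums:
  fixes g :: "'i \<Rightarrow> real"
  assumes g: "\<And>x. 0 \<le> g x" and K: "0 \<le> K"
  shows "(\<integral>\<^sup>+ l. ennreal (g l) \<partial>count_space A) \<le> ennreal K \<longleftrightarrow>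
    (\<forall>F. finite F \<and> F \<subseteq> A \<longrightarrow> sum g F \<le> K)"
proof
  assume le: "(\<integral>\<^sup>+ l. ennreal (g l) \<partial>count_space A) \<le> ennreal K"
  show "\<forall>F. finite F \<and> F \<subseteq> A \<longrightarrow> sum g F \<le> K"
  proof (intro allI impI)
    fix F assume F: "finite F \<and> F \<subseteq> A"
    have "ennreal (sum g F) = (\<Sum>l\<in>F. ennreal (g l) * indicator F l)"
      using g by (simp add: sum_ennreal)
    also have "\<dots> = (\<integral>\<^sup>+ l. ennreal (g l) * indicator F l \<partial>count_space A)"
      using F by (intro nn_integral_count_space'[symmetric]) auto
    also have "\<dots> \<le> (\<integral>\<^sup>+ l. ennreal (g l) \<partial>count_space A)"
      by (intro nn_integral_mono) (auto simp: indicator_def)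
    finally have "ennreal (sum g F) \<le> ennreal K" using le by (rule order_trans)
    then show "sum g F \<le> K" using K by (simp add: ennreal_le_iff)
  qed
next
  assume bound: "\<forall>F. finite F \<and> F \<subseteq> A \<longrightarrow> sum g F \<le> K"
  have summable: "Infinite_Set_Sum.abs_summable_on g A"
    by (rule abs_summable_finite_sumsI[where B = K]) (use bound g in auto)
  have "(\<integral>\<^sup>+ l. ennreal (g l) \<partial>count_space A) = ennreal (infsetsum g A)"
    by (rule nn_integral_conv_infsetsum[OF summable]) (use g in auto)
  also have "\<dots> = (SUP F\<in>{F. finite F \<and> F \<subseteq> A}. ennreal (sum g F))"
    by (rule infsetsum_nonneg_is_SUPREMUM_ennreal[OF summable]) (use g in auto)
  also have "\<dots> \<le> ennreal K" using bound by (intro SUP_least ennreal_leI) auto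
  finally show "(\<integral>\<^sup>+ l. ennreal (g l) \<partial>count_space A) \<le> ennreal K" .
qed

context
  fixes mu :: "(real^'n) measure"
  assumes mu: "prob_space mu" and borel: "sets mu = sets borel"
begin

lemma expo_measurable: "expo l \<in> borel_measurable mu"
proof -
  have "continuous_on UNIV (expo l)" unfolding expo_def by (intro continuous_intros)
  then have "expo l \<in> borel_measurable borel" by (rule borel_measurable_continuous_onI)
  then show ?thesis by (simp add: measurable_cong_sets[OF borel refl])
qed

lemma L2_sqnorm_expo: "L2_sqnorm mu (expo l) = 1"
  using prob_space.prob_space[OF mu] by (simp add: L2_sqnorm_def expo_def)

lemma sq_integrable_expo: "sq_integrable mu (expo l)"
  using expo_measurable prob_space.finite_measure[OF mu]
  by (simp add: sq_integrable_def expo_def finite_measure.integrable_const)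

lemma L2_inner_expo: "L2_inner mu (expo l) (expo l') = fourier_meas mu (l - l')"
  unfolding L2_inner_def fourier_meas_def expo_def
  by (simp add: cis_cnj cis_mult inner_diff_left algebra_simps)

lemma fourier_meas_zero: "fourier_meas mu 0 = 1"
  using prob_space.prob_space[OF mu] by (simp add: fourier_meas_def)

lemma orthonormal_expo_iff:
  "orthonormal mu expo Lam \<longleftrightarrow>
    (\<forall>l\<in>Lam. \<forall>l'\<in>Lam. l \<noteq> l' \<longrightarrow> (LINT x|mu. expo l x * cnj (expo l' x)) = 0)"
  using L2_inner_expo[of l l for l] fourier_meas_zero sq_integrable_expo
  unfolding orthonormal_def L2_inner_def by auto

lemma closed_span_eq_L2_closure: "closed_span mu Lam = L2_closure mu (lin_comb expo Lam)"
proof -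
  have sqrt_iff: "(\<forall>e>0. \<exists>p\<in>P. sqrt (q p) < e) \<longleftrightarrow> (\<forall>e>0. \<exists>p\<in>P. q p < e)"
    if "\<And>p. 0 \<le> q p" for P q
  proof
    assume H: "\<forall>e>0. \<exists>p\<in>P. sqrt (q p) < e"
    show "\<forall>e>0. \<exists>p\<in>P. q p < e"
      using H[rule_format, of "sqrt e" for e] by (auto simp: real_sqrt_less_iff)
  next
    assume H: "\<forall>e>0. \<exists>p\<in>P. q p < e"
    show "\<forall>e>0. \<exists>p\<in>P. sqrt (q p) < e"
    proof (intro allI impI)
      fix e :: real assume "e > 0"
      then obtain p where "p \<in> P" "q p < e^2" using H[rule_format, of "e^2"] by auto
      with \<open>e > 0\<close> show "\<exists>p\<in>P. sqrt (q p) < e" by (intro bexI[of _ p] real_less_lsqrt) auto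
    qed
  qed
  have "trig_polys Lam = lin_comb expo Lam"
    unfolding trig_polys_def lin_comb_def ..
  then show ?thesis
    unfolding closed_span_def L2_closure_def L2_norm_eq_sqrt
    by (intro Collect_cong conj_cong refl) (simp only:, rule sqrt_iff, rule L2_sqnorm_nonneg)
qed

lemma orthonormal_expo_iff_fourier_sq_sum_le_1:
  "orthonormal mu expo Lam \<longleftrightarrow>
    (\<forall>t. (\<integral>\<^sup>+ l. ennreal ((cmod (fourier_meas mu (t - l)))^2) \<partial>count_space Lam) \<le> 1)"
  unfolding ennreal_1[symmetric] nn_integral_count_space_le_iff_finite_sums[OF zero_le_power2 zero_le_one]
proof (intro iffI allI impI)
  fix t F assume on: "orthonormal mu expo Lam" and F: "finite F \<and> F \<subseteq> Lam"
  then show "(\<Sum>l\<in>F. (cmod (fourier_meas mu (t - l)))^2) \<le> 1"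
    using bessel_inequality[OF on _ _ sq_integrable_expo, of F t]
    by (simp add: L2_inner_expo L2_sqnorm_expo)
next
  assume bound: "\<forall>t F. finite F \<and> F \<subseteq> Lam \<longrightarrow> (\<Sum>l\<in>F. (cmod (fourier_meas mu (t - l)))^2) \<le> 1"
  have "fourier_meas mu (l - l') = 0" if "l \<in> Lam" "l' \<in> Lam" "l \<noteq> l'" for l l'
    using bound[rule_format, of "{l, l'}" l] that by (simp add: fourier_meas_zero)
  then show "orthonormal mu expo Lam"
    unfolding orthonormal_def by (simp add: L2_inner_expo fourier_meas_zero sq_integrable_expo)
qed

end

theorem theorem4p6:
  fixes mu :: "(real^'n) measure" and Lam :: "(real^'n) set"
    and MB :: "(real^'n \<Rightarrow> complex) measure"
  assumes "prob_space mu" and "sets mu = sets borel"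
    and "bohr_haar MB"
  shows "((\<forall>l\<in>Lam. \<forall>l'\<in>Lam. l \<noteq> l' \<longrightarrow>
              (LINT x|mu. expo l x * cnj (expo l' x)) = 0)
          \<longleftrightarrow>
          (\<exists>W :: (real^'n \<Rightarrow> complex) \<Rightarrow> ((real^'n \<Rightarrow> complex) \<Rightarrow> complex).
              (\<forall>f\<in>closed_span mu Lam. sq_integrable MB (W f)) \<and>
              (\<forall>f\<in>closed_span mu Lam. \<forall>g\<in>closed_span mu Lam. \<forall>a b.
                  AE chi in MB. W (\<lambda>x. a * f x + b * g x) chi = a * W f chi + b * W g chi) \<and>
              (\<forall>f\<in>closed_span mu Lam. L2_norm MB (W f) = L2_norm mu f) \<and>
              (\<forall>l\<in>Lam. AE chi in MB. W (expo l) chi = chi l)))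
       \<and>
         ((\<forall>l\<in>Lam. \<forall>l'\<in>Lam. l \<noteq> l' \<longrightarrow>
              (LINT x|mu. expo l x * cnj (expo l' x)) = 0)
          \<longleftrightarrow>
          (\<forall>t. (\<integral>\<^sup>+ l. ennreal ((cmod (fourier_meas mu (t - l)))^2) \<partial>count_space Lam) \<le> 1))"
proof -
  note mu = assms(1,2)
  have bohr: "orthonormal MB (\<lambda>l chi. chi l) Lam"
    by (rule orthonormal_bohr_characters[OF assms(3)])
  show ?thesis (is "(?i \<longleftrightarrow> ?ii) \<and> (?i \<longleftrightarrow> ?iii)")
  proof (intro conjI iffI)
    assume ?i
    then have "orthonormal mu expo Lam" by (simp add: orthonormal_expo_iff[OF mu])
    then show ?ii unfolding closed_span_eq_L2_closure[OF mu]
      by (rule orthonormal_isometry_exists[OF bohr_haar_prob_space[OF assms(3)] _ bohr])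
  next
    assume ?ii
    then show ?i unfolding closed_span_eq_L2_closure[OF mu]
      using orthogonal_if_isometry_onto_orthonormal[OF bohr sq_integrable_expo[OF mu]]
      by (auto simp: L2_inner_def)
  next
    assume ?i
    then show ?iii
      by (simp add: orthonormal_expo_iff[OF mu, symmetric] orthonormal_expo_iff_fourier_sq_sum_le_1[OF mu])
  next
    assume ?iii
    then show ?i
      by (simp add: orthonormal_expo_iff[OF mu, symmetric] orthonormal_expo_iff_fourier_sq_sum_le_1[OF mu])
  qed
qed

end
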